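(* Let $\mathcal{D}=\{(X_i,B_i):i\in I\}$ be a collection of random variable/nonempty event pairs with coherent$_1$ conditional previsions $\{P(X_i\mid B_i):i\in I\}$. Let $X$ be a random variable and $B$ a nonempty event such that $(B,\Omega)\in\mathcal{D}$ and $(XB,\Omega)\in\mathcal{D}$, where $XB$ is the product of $X$ with the indicator of $B$, and $P(B)=P(B\mid\Omega)=0$. (1) If $P(XB)=P(XB\mid\Omega)\ne0$, the only value $p$ for which the previsions in $\mathcal{D}$ together with $P(X\mid B)=p$ are coherent$_1$ is the infinite value with the same sign as $P(XB)$. (2) If $P(XB)=0$, then for every extended real number $p$, the previsions in $\mathcal{D}$ together with $P(X\mid B)=p$ are coherent$_1$.
   Context: Let $\Omega$ be a nonempty set of states $\omega$; events are subsets of $\Omega$ and random variables are real-valued functions on $\Omega$. An event $B$ is identified with its indicator function. A conditional prevision $P(X\mid B)$ is an extended real number; $P(X)=P(X\mid\Omega)$. Coherence$_1$: a collection $\{P(X_i\mid B_i):i\in I\}$ is coherent$_1$ if for every finite $\{i_1,\dots,i_n\}\subseteq I$, all real $\alpha_1,\dots,\alpha_n$ with $\alpha_j\ge 0$ whenever $P(X_{i_j}\mid B_{i_j})=+\infty$ and $\alpha_j\le 0$ whenever $P(X_{i_j}\mid B_{i_j})=-\infty$, and all real $c_1,\dots,c_n$ with $c_j=P(X_{i_j}\mid B_{i_j})$ whenever that prevision is finite, we have $\sup_\omega \sum_{j=1}^n \alpha_j B_{i_j}(\omega)[X_{i_j}(\omega)-c_j]\ge 0$. *)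

theory Defs
  imports "HOL-Library.Extended_Real" "HOL-Library.Indicator_Function"
begin

text \<open>States are elements of the type 'w (Omega = UNIV). A random variable is a
function 'w => real, an event a set of states (identified with its indicator).\<close>

definition coherent1 :: "(('w \<Rightarrow> real) \<times> 'w set) set \<Rightarrow> (('w \<Rightarrow> real) \<times> 'w set \<Rightarrow> ereal) \<Rightarrow> bool" where
  "coherent1 D P \<longleftrightarrow>
     (\<forall>F \<alpha> c. F \<subseteq> D \<and> finite F
        \<and> (\<forall>f\<in>F. P f = \<infinity> \<longrightarrow> \<alpha> f \<ge> (0::real))
        \<and> (\<forall>f\<in>F. P f = -\<infinity> \<longrightarrow> \<alpha> f \<le> 0)
        \<and> (\<forall>f\<in>F. \<bar>P f\<bar> \<noteq> \<infinity> \<longrightarrow> c f = real_of_ereal (P f))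
      \<longrightarrow> (SUP \<omega>. ereal (\<Sum>f\<in>F. \<alpha> f * indicator (snd f) \<omega> * (fst f \<omega> - c f))) \<ge> 0)"

end

theory Submission
  imports Defs
begin

text \<open>Writing \<open>XB\<close> for \<open>X \<cdot> B\<close>, a bet of stake \<open>t\<close> on \<open>(X, B)\<close> at price \<open>r\<close> pays
  \<open>t B (X - r) = t (XB - P(XB)) - t r (B - 0) + t P(XB)\<close>, i.e. a combination of
  bets on \<open>XB\<close> and \<open>B\<close>, both priced within \<open>\<D>\<close>, plus the constant \<open>t P(XB)\<close>.
  If \<open>P(XB) = 0\<close>, or if \<open>p\<close> is the infinite value with the sign of \<open>P(XB)\<close> (so that
  the stake has that sign too), this constant is nonnegative and every gain of the
  extended assessment dominates a gain of \<open>\<D>\<close>; hence coherence is inherited. If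
  \<open>P(XB) \<noteq> 0\<close> and \<open>p\<close> is anything else, the same identity with a stake opposite in
  sign to \<open>P(XB)\<close> yields a gain equal to a negative constant.\<close>

definition admissible :: "'a set \<Rightarrow> ('a \<Rightarrow> ereal) \<Rightarrow> ('a \<Rightarrow> real) \<Rightarrow> ('a \<Rightarrow> real) \<Rightarrow> bool" where
  "admissible F P \<alpha> c \<longleftrightarrow>
     (\<forall>f\<in>F. (P f = \<infinity> \<longrightarrow> 0 \<le> \<alpha> f) \<and> (P f = -\<infinity> \<longrightarrow> \<alpha> f \<le> 0)
        \<and> (\<bar>P f\<bar> \<noteq> \<infinity> \<longrightarrow> c f = real_of_ereal (P f)))"

definition gain ::
  "(('w \<Rightarrow> real) \<times> 'w set) set \<Rightarrow> (('w \<Rightarrow> real) \<times> 'w set \<Rightarrow> real)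
     \<Rightarrow> (('w \<Rightarrow> real) \<times> 'w set \<Rightarrow> real) \<Rightarrow> 'w \<Rightarrow> real" where
  "gain F \<alpha> c \<omega> = (\<Sum>f\<in>F. \<alpha> f * indicator (snd f) \<omega> * (fst f \<omega> - c f))"

definition dominates_gain ::
  "(('w \<Rightarrow> real) \<times> 'w set) set \<Rightarrow> (('w \<Rightarrow> real) \<times> 'w set \<Rightarrow> ereal) \<Rightarrow> ('w \<Rightarrow> real) \<Rightarrow> bool" where
  "dominates_gain D P g \<longleftrightarrow>
     (\<exists>F \<alpha> c. F \<subseteq> D \<and> finite F \<and> admissible F P \<alpha> c \<and> (\<forall>\<omega>. gain F \<alpha> c \<omega> \<le> g \<omega>))"

lemma coherent1_iff_gain:
  "coherent1 D P \<longleftrightarrow>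
     (\<forall>F \<alpha> c. F \<subseteq> D \<longrightarrow> finite F \<longrightarrow> admissible F P \<alpha> c \<longrightarrow> 0 \<le> (SUP \<omega>. ereal (gain F \<alpha> c \<omega>)))"
  unfolding coherent1_def admissible_def gain_def by (simp add: ball_conj_distrib imp_conjL)

lemma coherent1_SUP_nonneg:
  assumes "coherent1 D P" and "dominates_gain D P g"
  shows "0 \<le> (SUP \<omega>. ereal (g \<omega>))"
proof -
  obtain F \<alpha> c where F: "F \<subseteq> D" "finite F" "admissible F P \<alpha> c"
    and le: "\<And>\<omega>. gain F \<alpha> c \<omega> \<le> g \<omega>"
    using assms(2) unfolding dominates_gain_def by blast
  have "0 \<le> (SUP \<omega>. ereal (gain F \<alpha> c \<omega>))"
    using assms(1) F unfolding coherent1_iff_gain by blast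
  also have "\<dots> \<le> (SUP \<omega>. ereal (g \<omega>))"
    by (rule SUP_mono) (use le in auto)
  finally show ?thesis .
qed

lemma coherent1_constant_nonneg:
  assumes "coherent1 D P" and "dominates_gain D P (\<lambda>_. r)"
  shows "0 \<le> r"
  using coherent1_SUP_nonneg[OF assms] by simp

lemma coherent1_if_gains_dominate:
  assumes "coherent1 D P"
    and "\<And>F \<alpha> c. F \<subseteq> D' \<Longrightarrow> finite F \<Longrightarrow> admissible F P' \<alpha> c \<Longrightarrow> dominates_gain D P (gain F \<alpha> c)"
  shows "coherent1 D' P'"
  unfolding coherent1_iff_gain
proof (intro allI impI)
  fix F \<alpha> c
  assume "F \<subseteq> D'" "finite F" "admissible F P' \<alpha> c"
  then show "0 \<le> (SUP \<omega>. ereal (gain F \<alpha> c \<omega>))"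
    by (intro coherent1_SUP_nonneg[OF assms(1) assms(2)])
qed

lemma dominates_gain_mono:
  assumes "dominates_gain D P f" and "\<And>\<omega>. f \<omega> \<le> g \<omega>"
  shows "dominates_gain D P g"
  using assms order_trans unfolding dominates_gain_def by meson

lemma dominates_gain_refl:
  "F \<subseteq> D \<Longrightarrow> finite F \<Longrightarrow> admissible F P \<alpha> c \<Longrightarrow> dominates_gain D P (gain F \<alpha> c)"
  unfolding dominates_gain_def by blast

lemma dominates_gain_single_bet:
  assumes "(Y, A) \<in> D"
    and "P (Y, A) = \<infinity> \<Longrightarrow> 0 \<le> t" and "P (Y, A) = -\<infinity> \<Longrightarrow> t \<le> 0"
    and "\<bar>P (Y, A)\<bar> \<noteq> \<infinity> \<Longrightarrow> r = real_of_ereal (P (Y, A))"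
  shows "dominates_gain D P (\<lambda>\<omega>. t * indicator A \<omega> * (Y \<omega> - r))"
proof -
  have "admissible {(Y, A)} P (\<lambda>_. t) (\<lambda>_. r)"
    using assms(2-4) unfolding admissible_def by auto
  moreover have "gain {(Y, A)} (\<lambda>_. t) (\<lambda>_. r) = (\<lambda>\<omega>. t * indicator A \<omega> * (Y \<omega> - r))"
    by (simp add: gain_def fun_eq_iff)
  ultimately show ?thesis
    using dominates_gain_refl[of "{(Y, A)}" D P] assms(1) by fastforce
qed

lemma gain_mono_prices:
  assumes "\<And>f. f \<in> F \<Longrightarrow> 0 \<le> \<alpha> f * (d f - c f)"
  shows "gain F \<alpha> d \<omega> \<le> gain F \<alpha> c \<omega>"
  unfolding gain_def
proof (rule sum_mono)
  fix f assume "f \<in> F"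
  have "0 \<le> indicator (snd f) \<omega> * (\<alpha> f * (d f - c f))"
    using assms[OF \<open>f \<in> F\<close>] by (simp add: indicator_def)
  then show "\<alpha> f * indicator (snd f) \<omega> * (fst f \<omega> - d f) \<le> \<alpha> f * indicator (snd f) \<omega> * (fst f \<omega> - c f)"
    by (simp add: algebra_simps)
qed

lemma gain_extend_zero:
  assumes "finite G" and "F \<subseteq> G"
  shows "gain G (\<lambda>f. if f \<in> F then \<alpha> f else 0) c \<omega> = gain F \<alpha> c \<omega>"
  unfolding gain_def using assms
  by (simp add: if_distrib[where f = "\<lambda>z. z * _"] sum.If_cases Int_absorb1 cong: if_cong)

text \<open>Bets on a common item are merged at the less favourable of their two prices. These
  can differ only when the prevision is infinite, and then the sign constraint on the
  stakes makes the change of price lower each gain.\<close>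

lemma dominates_gain_add:
  assumes "dominates_gain D P f" and "dominates_gain D P g"
  shows "dominates_gain D P (\<lambda>\<omega>. f \<omega> + g \<omega>)"
proof -
  obtain F \<alpha> c where F: "F \<subseteq> D" "finite F" and adm\<alpha>: "admissible F P \<alpha> c"
    and f: "\<And>\<omega>. gain F \<alpha> c \<omega> \<le> f \<omega>"
    using assms(1) unfolding dominates_gain_def by blast
  obtain G \<beta> d where G: "G \<subseteq> D" "finite G" and adm\<beta>: "admissible G P \<beta> d"
    and g: "\<And>\<omega>. gain G \<beta> d \<omega> \<le> g \<omega>"
    using assms(2) unfolding dominates_gain_def by blast
  define H where "H = F \<union> G"
  define \<alpha>' where "\<alpha>' h = (if h \<in> F then \<alpha> h else 0)" for h
  define \<beta>' where "\<beta>' h = (if h \<in> G then \<beta> h else 0)" for h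
  define e where "e h = (if P h = \<infinity> then max (c h) (d h)
      else if P h = -\<infinity> then min (c h) (d h) else real_of_ereal (P h))" for h
  have H: "H \<subseteq> D" "finite H" using F G unfolding H_def by auto
  have \<alpha>'_pos: "P h = \<infinity> \<Longrightarrow> 0 \<le> \<alpha>' h" and \<alpha>'_neg: "P h = -\<infinity> \<Longrightarrow> \<alpha>' h \<le> 0"
    and \<alpha>'_price: "h \<in> F \<Longrightarrow> \<bar>P h\<bar> \<noteq> \<infinity> \<Longrightarrow> c h = real_of_ereal (P h)" for h
    using adm\<alpha> unfolding admissible_def \<alpha>'_def by auto
  have \<beta>'_pos: "P h = \<infinity> \<Longrightarrow> 0 \<le> \<beta>' h" and \<beta>'_neg: "P h = -\<infinity> \<Longrightarrow> \<beta>' h \<le> 0"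
    and \<beta>'_price: "h \<in> G \<Longrightarrow> \<bar>P h\<bar> \<noteq> \<infinity> \<Longrightarrow> d h = real_of_ereal (P h)" for h
    using adm\<beta> unfolding admissible_def \<beta>'_def by auto
  have adm: "admissible H P (\<lambda>h. \<alpha>' h + \<beta>' h) e"
    unfolding admissible_def
    using \<alpha>'_pos \<alpha>'_neg \<beta>'_pos \<beta>'_neg
    by (simp add: e_def add_nonneg_nonneg add_nonpos_nonpos)
  have "0 \<le> \<alpha>' h * (e h - c h)" for h
  proof (cases "h \<in> F")
    case True
    then show ?thesis
      using \<alpha>'_pos[of h] \<alpha>'_neg[of h] \<alpha>'_price[of h]
      by (cases "P h") (auto simp: e_def mult_nonpos_nonpos)
  qed (simp add: \<alpha>'_def)
  then have \<alpha>': "gain H \<alpha>' e \<omega> \<le> gain F \<alpha> c \<omega>" for \<omega>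
    using gain_mono_prices[of H \<alpha>' e c \<omega>] gain_extend_zero[OF \<open>finite H\<close>, of F \<alpha> c \<omega>]
    unfolding H_def \<alpha>'_def by auto
  have "0 \<le> \<beta>' h * (e h - d h)" for h
  proof (cases "h \<in> G")
    case True
    then show ?thesis
      using \<beta>'_pos[of h] \<beta>'_neg[of h] \<beta>'_price[of h]
      by (cases "P h") (auto simp: e_def mult_nonpos_nonpos)
  qed (simp add: \<beta>'_def)
  then have \<beta>': "gain H \<beta>' e \<omega> \<le> gain G \<beta> d \<omega>" for \<omega>
    using gain_mono_prices[of H \<beta>' e d \<omega>] gain_extend_zero[OF \<open>finite H\<close>, of G \<beta> d \<omega>]
    unfolding H_def \<beta>'_def by auto
  have "gain H (\<lambda>h. \<alpha>' h + \<beta>' h) e \<omega> = gain H \<alpha>' e \<omega> + gain H \<beta>' e \<omega>" for \<omega>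
    unfolding gain_def by (simp add: sum.distrib distrib_right)
  then have "gain H (\<lambda>h. \<alpha>' h + \<beta>' h) e \<omega> \<le> f \<omega> + g \<omega>" for \<omega>
    using \<alpha>' \<beta>' f g by (metis add_mono order_trans)
  then show ?thesis
    using H adm unfolding dominates_gain_def by blast
qed

lemma coherent1_extend_conditional:
  fixes D :: "(('w \<Rightarrow> real) \<times> 'w set) set"
    and P :: "('w \<Rightarrow> real) \<times> 'w set \<Rightarrow> ereal"
    and X :: "'w \<Rightarrow> real" and B :: "'w set" and p :: ereal
  assumes coh: "coherent1 D P"
    and B_in: "(indicator B, UNIV) \<in> D"
    and XB_in: "((\<lambda>\<omega>. X \<omega> * indicator B \<omega>), UNIV) \<in> D"
    and PB: "P (indicator B, UNIV) = 0"
    and sign: "P ((\<lambda>\<omega>. X \<omega> * indicator B \<omega>), UNIV) = 0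
       \<or> (p = \<infinity> \<and> 0 < P ((\<lambda>\<omega>. X \<omega> * indicator B \<omega>), UNIV))
       \<or> (p = -\<infinity> \<and> P ((\<lambda>\<omega>. X \<omega> * indicator B \<omega>), UNIV) < 0)"
  shows "coherent1 (insert (X, B) D) (P((X, B) := p))"
proof (rule coherent1_if_gains_dominate[OF coh])
  fix F \<alpha> c
  assume F: "F \<subseteq> insert (X, B) D" "finite F" and adm: "admissible F (P((X, B) := p)) \<alpha> c"
  define a where "a = P ((\<lambda>\<omega>. X \<omega> * indicator B \<omega>), UNIV)"
  define F' where "F' = F - {(X, B)}"
  define t where "t = (if (X, B) \<in> F then \<alpha> (X, B) else 0)"
  define r where "r = c (X, B)"
  have gain_F: "gain F \<alpha> c \<omega> = gain F' \<alpha> c \<omega> + t * indicator B \<omega> * (X \<omega> - r)" for \<omega>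
    using F(2) unfolding gain_def F'_def t_def r_def by (simp add: sum_diff1)
  have t_pos: "p = \<infinity> \<Longrightarrow> 0 \<le> t" and t_neg: "p = -\<infinity> \<Longrightarrow> t \<le> 0"
    using adm unfolding admissible_def t_def by auto
  have "admissible F' P \<alpha> c"
    using adm unfolding admissible_def F'_def by auto
  then have old: "dominates_gain D P (gain F' \<alpha> c)"
    using F unfolding F'_def by (intro dominates_gain_refl) auto
  \<comment> \<open>If \<open>a\<close> is infinite the price of this bet is unconstrained, and \<open>real_of_ereal a = 0\<close>.\<close>
  have XB: "dominates_gain D P (\<lambda>\<omega>. t * indicator UNIV \<omega> * (X \<omega> * indicator B \<omega> - real_of_ereal a))"
    by (rule dominates_gain_single_bet[OF XB_in]) (use sign t_pos t_neg in \<open>auto simp: a_def\<close>)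
  have B: "dominates_gain D P (\<lambda>\<omega>. (- t * r) * indicator UNIV \<omega> * (indicator B \<omega> - 0))"
    by (rule dominates_gain_single_bet[OF B_in]) (simp_all add: PB)
  have "0 \<le> t * real_of_ereal a"
    using sign unfolding a_def[symmetric]
  proof (elim disjE conjE)
    assume "p = -\<infinity>" "a < 0"
    then show ?thesis
      using t_neg by (intro mult_nonpos_nonpos) (simp_all add: less_imp_le)
  qed (simp_all add: t_pos real_of_ereal_pos)
  have le: "gain F' \<alpha> c \<omega> + t * indicator UNIV \<omega> * (X \<omega> * indicator B \<omega> - real_of_ereal a)
      + (- t * r) * indicator UNIV \<omega> * (indicator B \<omega> - 0) \<le> gain F \<alpha> c \<omega>" for \<omega>
  proof -
    have "t * indicator B \<omega> * (X \<omega> - r)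
        = t * (X \<omega> * indicator B \<omega> - real_of_ereal a) + (- t * r) * indicator B \<omega> + t * real_of_ereal a"
      by (simp add: algebra_simps)
    then show ?thesis
      using \<open>0 \<le> t * real_of_ereal a\<close> by (simp add: gain_F)
  qed
  show "dominates_gain D P (gain F \<alpha> c)"
    by (rule dominates_gain_mono[OF dominates_gain_add[OF dominates_gain_add[OF old XB] B] le])
qed

lemma not_coherent1_extend_conditional:
  fixes D :: "(('w \<Rightarrow> real) \<times> 'w set) set"
    and P :: "('w \<Rightarrow> real) \<times> 'w set \<Rightarrow> ereal"
    and X :: "'w \<Rightarrow> real" and B :: "'w set" and p :: ereal
  assumes B_in: "(indicator B, UNIV) \<in> D"
    and XB_in: "((\<lambda>\<omega>. X \<omega> * indicator B \<omega>), UNIV) \<in> D"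
    and new: "(X, B) \<notin> D"
    and PB: "P (indicator B, UNIV) = 0"
    and nonzero: "P ((\<lambda>\<omega>. X \<omega> * indicator B \<omega>), UNIV) \<noteq> 0"
    and p: "p \<noteq> (if 0 < P ((\<lambda>\<omega>. X \<omega> * indicator B \<omega>), UNIV) then \<infinity> else -\<infinity>)"
  shows "\<not> coherent1 (insert (X, B) D) (P((X, B) := p))"
proof
  define D' where "D' = insert (X, B) D"
  define P' where "P' = P((X, B) := p)"
  define a where "a = P ((\<lambda>\<omega>. X \<omega> * indicator B \<omega>), UNIV)"
  define \<sigma> :: real where "\<sigma> = (if 0 < a then 1 else -1)"
  define r where "r = real_of_ereal p"
  define s where "s = (if \<bar>a\<bar> = \<infinity> then \<sigma> else real_of_ereal a)"
  assume "coherent1 (insert (X, B) D) (P((X, B) := p))"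
  then have coh: "coherent1 D' P'" unfolding D'_def P'_def .
  have P'_XB: "P' ((\<lambda>\<omega>. X \<omega> * indicator B \<omega>), UNIV) = a" and P'_B: "P' (indicator B, UNIV) = 0"
    using B_in XB_in new PB unfolding P'_def a_def by auto
  have "0 < \<sigma> * s"
    using nonzero unfolding a_def[symmetric] \<sigma>_def s_def by (cases a) auto
  have X: "dominates_gain D' P' (\<lambda>\<omega>. - \<sigma> * indicator B \<omega> * (X \<omega> - r))"
    by (rule dominates_gain_single_bet)
      (use p in \<open>auto simp: D'_def P'_def \<sigma>_def r_def a_def split: if_splits\<close>)
  have B: "dominates_gain D' P' (\<lambda>\<omega>. (- \<sigma> * r) * indicator UNIV \<omega> * (indicator B \<omega> - 0))"
    by (rule dominates_gain_single_bet) (use B_in P'_B in \<open>auto simp: D'_def\<close>)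
  have XB: "dominates_gain D' P' (\<lambda>\<omega>. \<sigma> * indicator UNIV \<omega> * (X \<omega> * indicator B \<omega> - s))"
    by (rule dominates_gain_single_bet) (use XB_in P'_XB in \<open>auto simp: D'_def \<sigma>_def s_def\<close>)
  have "dominates_gain D' P' (\<lambda>_. - (\<sigma> * s))"
    by (rule dominates_gain_mono[OF dominates_gain_add[OF dominates_gain_add[OF X B] XB]])
      (simp add: algebra_simps)
  with coherent1_constant_nonneg[OF coh] \<open>0 < \<sigma> * s\<close> show False by fastforce
qed

theorem lemma6p2:
  fixes D :: "(('w \<Rightarrow> real) \<times> 'w set) set"
    and P :: "('w \<Rightarrow> real) \<times> 'w set \<Rightarrow> ereal"
    and X :: "'w \<Rightarrow> real" and B :: "'w set"
  assumes nonempty: "\<forall>f\<in>D. snd f \<noteq> {}"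
    and coh: "coherent1 D P"
    and B_ne: "B \<noteq> {}"
    and B_in: "(indicator B, UNIV) \<in> D"
    and XB_in: "((\<lambda>\<omega>. X \<omega> * indicator B \<omega>), UNIV) \<in> D"
    and new: "(X, B) \<notin> D"
    and PB: "P (indicator B, UNIV) = 0"
  shows "(P ((\<lambda>\<omega>. X \<omega> * indicator B \<omega>), UNIV) \<noteq> 0 \<longrightarrow>
           (\<forall>p. coherent1 (insert (X, B) D) (P((X, B) := p)) \<longleftrightarrow>
                p = (if P ((\<lambda>\<omega>. X \<omega> * indicator B \<omega>), UNIV) > 0 then \<infinity> else -\<infinity>)))
       \<and> (P ((\<lambda>\<omega>. X \<omega> * indicator B \<omega>), UNIV) = 0 \<longrightarrow>
           (\<forall>p. coherent1 (insert (X, B) D) (P((X, B) := p))))"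
proof -
  let ?a = "P ((\<lambda>\<omega>. X \<omega> * indicator B \<omega>), UNIV)"
  note extend = coherent1_extend_conditional[where D = D and P = P and X = X and B = B,
      OF coh B_in XB_in PB]
  note restrict = not_coherent1_extend_conditional[where D = D and P = P and X = X and B = B,
      OF B_in XB_in new PB]
  show ?thesis
  proof (intro conjI impI allI)
    fix p
    assume "?a = 0"
    then show "coherent1 (insert (X, B) D) (P((X, B) := p))"
      by (intro extend) simp
  next
    fix p
    assume nonzero: "?a \<noteq> 0"
    show "coherent1 (insert (X, B) D) (P((X, B) := p)) \<longleftrightarrow> p = (if ?a > 0 then \<infinity> else -\<infinity>)"
    proof
      assume "coherent1 (insert (X, B) D) (P((X, B) := p))"
      then show "p = (if ?a > 0 then \<infinity> else -\<infinity>)"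
        using restrict[OF nonzero, of p] by blast
    next
      assume "p = (if ?a > 0 then \<infinity> else -\<infinity>)"
      moreover have "?a < 0 \<or> 0 < ?a"
        using nonzero by (simp add: neq_iff)
      ultimately show "coherent1 (insert (X, B) D) (P((X, B) := p))"
        by (intro extend) auto
    qed
  qed
qed

end
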